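(* Let $X$ be a simplicial complex, $\sigma=\{v_0,v_1,v_2\}$ a 2-simplex of $X$, and $\Gamma=(v_0,v_1,v_2,v_0)$. If $E\to|X|$ is an $\epsilon$-flat bundle with $\epsilon\le1/\sqrt2$, then $\|T_\Gamma-\mathrm{id}\|\le 7\sqrt2\,\epsilon$.
   Context: Let $A$ be a unital C*-algebra and $V$ a finitely generated projective Hilbert $A$-module (isomorphic to $pA^k$ for a projection $p\in\mathcal L_A(A^k)$); $U(\mathcal L_A(V))$ is the unitary group of the adjointable operators on $V$, metrized by the operator norm. A Hilbert $A$-module bundle with fibre $V$ is a fibre bundle with fibre $V$ and structure group $U(\mathcal L_A(V))$. For a simplicial complex $X$ and a simplex $\sigma$ of dimension $n$ (vertices ordered), $j_\sigma\colon\Delta^n\to|X|$ is the affine embedding of the standard simplex $\Delta^n\subset\mathbb R^{n+1}$ and $|\sigma|=j_\sigma(\Delta^n)$, metrized so that $j_\sigma$ is a Euclidean isometry. A family of trivializations of $E\to|X|$ consists of maps $\Phi_\sigma\colon|\sigma|\times V\to E|_{|\sigma|}$, one for each simplex, with each $\Phi_\sigma(x,\cdot)$ an isomorphism of Hilbert $A$-modules; for $\rho\subset\sigma$ the transition function is $\Psi_{\rho\subset\sigma}(x)=\Phi_\rho(x,\cdot)^{-1}\Phi_\sigma(x,\cdot)$, $x\in|\rho|$. The family is $\epsilon$-flat if all $\Psi_{\rho\subset\sigma}$ are $\epsilon$-Lipschitz; an $\epsilon$-flat bundle is a bundle with an $\epsilon$-flat family of trivializations. For an edge $\{v_0,v_1\}=\tau$,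 $T_{(v_0,v_1)}=\Phi_\tau(v_1,\cdot)\Phi_\tau(v_0,\cdot)^{-1}\colon E_{v_0}\to E_{v_1}$; for a simplicial path $\Gamma=(v_0,\dots,v_k)$ (consecutive vertices span edges), $T_\Gamma=T_{(v_{k-1},v_k)}\cdots T_{(v_0,v_1)}$. Norms are operator norms. *)

theory Defs
  imports "HOL-Analysis.Analysis"
begin

text \<open>A unital C*-algebra is represented by a real unital Banach algebra type 'b
 together with a complex scalar multiplication cmul and an involution st
 satisfying the usual axioms and the C*-identity.  This plays the role of
 the algebra of adjointable operators on V, with its operator norm.\<close>

definition cstar_algebra ::
  "('b::{real_normed_algebra_1, banach} \<Rightarrow> 'b) \<Rightarrow> (complex \<Rightarrow> 'b \<Rightarrow> 'b) \<Rightarrow> bool" where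
  "cstar_algebra st cmul \<longleftrightarrow>
     (\<forall>r a. cmul (complex_of_real r) a = r *\<^sub>R a) \<and>
     (\<forall>c d a. cmul (c + d) a = cmul c a + cmul d a) \<and>
     (\<forall>c a b. cmul c (a + b) = cmul c a + cmul c b) \<and>
     (\<forall>c d a. cmul (c * d) a = cmul c (cmul d a)) \<and>
     (\<forall>c a b. cmul c (a * b) = cmul c a * b) \<and>
     (\<forall>c a b. cmul c (a * b) = a * cmul c b) \<and>
     (\<forall>c a. norm (cmul c a) = cmod c * norm a) \<and>
     (\<forall>a. st (st a) = a) \<and>
     (\<forall>a b. st (a + b) = st a + st b) \<and>
     (\<forall>c a. st (cmul c a) = cmul (cnj c) (st a)) \<and>
     (\<forall>a b. st (a * b) = st b * st a) \<and>
     (\<forall>a. norm (st a * a) = (norm a)\<^sup>2)"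

definition unitary :: "('b::real_normed_algebra_1 \<Rightarrow> 'b) \<Rightarrow> 'b \<Rightarrow> bool" where
  "unitary st u \<longleftrightarrow> st u * u = 1 \<and> u * st u = 1"

definition simplicial_complex :: "'a set set \<Rightarrow> bool" where
  "simplicial_complex X \<longleftrightarrow>
     (\<forall>\<sigma>\<in>X. finite \<sigma> \<and> \<sigma> \<noteq> {}) \<and>
     (\<forall>\<sigma>\<in>X. \<forall>\<rho>. \<rho> \<subseteq> \<sigma> \<and> \<rho> \<noteq> {} \<longrightarrow> \<rho> \<in> X)"

text \<open>Points of the geometric realisation are given by barycentric coordinates;
 the closed simplex |sigma| consists of those supported on sigma.\<close>

definition simplex_pts :: "'a set \<Rightarrow> ('a \<Rightarrow> real) set" where
  "simplex_pts \<sigma> = {x. (\<forall>v. 0 \<le> x v) \<and> (\<forall>v. v \<notin> \<sigma> \<longrightarrow> x v = 0) \<and> sum x \<sigma> = 1}"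

text \<open>The metric on |sigma| making the affine embedding of the standard simplex
 (in R^(n+1)) a Euclidean isometry.\<close>

definition sdist :: "'a set \<Rightarrow> ('a \<Rightarrow> real) \<Rightarrow> ('a \<Rightarrow> real) \<Rightarrow> real" where
  "sdist \<sigma> x y = sqrt (\<Sum>v\<in>\<sigma>. (x v - y v)\<^sup>2)"

definition vtx :: "'a \<Rightarrow> ('a \<Rightarrow> real)" where
  "vtx v = (\<lambda>w. if w = v then 1 else 0)"

text \<open>A family of trivialisations Phi_sigma is recorded by g sigma x, the unitary
 Phi_sigma(x) expressed relative to a (pointwise) reference isomorphism V \<cong> E_x.\<close>

definition trivialization_family ::
  "('b::real_normed_algebra_1 \<Rightarrow> 'b) \<Rightarrow> 'a set set \<Rightarrow> ('a set \<Rightarrow> ('a \<Rightarrow> real) \<Rightarrow> 'b) \<Rightarrow> bool" where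
  "trivialization_family st X g \<longleftrightarrow>
     (\<forall>\<sigma>\<in>X. \<forall>x\<in>simplex_pts \<sigma>. unitary st (g \<sigma> x))"

definition transition ::
  "('b::real_normed_algebra_1 \<Rightarrow> 'b) \<Rightarrow> ('a set \<Rightarrow> ('a \<Rightarrow> real) \<Rightarrow> 'b) \<Rightarrow> 'a set \<Rightarrow> 'a set \<Rightarrow> ('a \<Rightarrow> real) \<Rightarrow> 'b" where
  "transition st g \<rho> \<sigma> x = st (g \<rho> x) * g \<sigma> x"

definition eps_flat ::
  "('b::real_normed_algebra_1 \<Rightarrow> 'b) \<Rightarrow> 'a set set \<Rightarrow> ('a set \<Rightarrow> ('a \<Rightarrow> real) \<Rightarrow> 'b) \<Rightarrow> real \<Rightarrow> bool" where
  "eps_flat st X g \<epsilon> \<longleftrightarrow>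
     (\<forall>\<rho>\<in>X. \<forall>\<sigma>\<in>X. \<rho> \<subseteq> \<sigma> \<longrightarrow>
        (\<forall>x\<in>simplex_pts \<rho>. \<forall>y\<in>simplex_pts \<rho>.
           norm (transition st g \<rho> \<sigma> x - transition st g \<rho> \<sigma> y) \<le> \<epsilon> * sdist \<rho> x y))"

definition edge_transport ::
  "('b::real_normed_algebra_1 \<Rightarrow> 'b) \<Rightarrow> ('a set \<Rightarrow> ('a \<Rightarrow> real) \<Rightarrow> 'b) \<Rightarrow> 'a \<Rightarrow> 'a \<Rightarrow> 'b" where
  "edge_transport st g a b = g {a, b} (vtx b) * st (g {a, b} (vtx a))"

fun path_transport ::
  "('b::real_normed_algebra_1 \<Rightarrow> 'b) \<Rightarrow> ('a set \<Rightarrow> ('a \<Rightarrow> real) \<Rightarrow> 'b) \<Rightarrow> 'a list \<Rightarrow> 'b" where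
  "path_transport st g (a # b # rest) = path_transport st g (b # rest) * edge_transport st g a b"
| "path_transport st g _ = 1"

end

theory Submission
  imports Defs
begin

(* Read every edge transport of the triangle in the trivialisation of the 2-simplex
   sigma itself: T_(a,b) = Phi_sigma(b) D_ab Phi_sigma(a)^-1 with D_ab = Psi(b)^-1 Psi(a),
   where Psi = Psi_({a,b} <= sigma).  Flatness gives |Psi(b) - Psi(a)| <= sqrt 2 eps, hence
   |D_ab - 1| <= sqrt 2 eps.  Around the loop the inner factors Phi_sigma(v)^-1 Phi_sigma(v)
   cancel, so T_Gamma is conjugate to the product of three unitaries, each within sqrt 2 eps
   of the identity, and |T_Gamma - 1| <= 3 sqrt 2 eps. *)

lemma cstar_algebra_st_mult: "cstar_algebra st cmul \<Longrightarrow> st (a * b) = st b * st a"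
  unfolding cstar_algebra_def by blast

lemma cstar_algebra_st_st: "cstar_algebra st cmul \<Longrightarrow> st (st a) = a"
  unfolding cstar_algebra_def by blast

lemma cstar_algebra_norm_st_mult_self: "cstar_algebra st cmul \<Longrightarrow> norm (st a * a) = (norm a)\<^sup>2"
  unfolding cstar_algebra_def by blast

lemma unitary_st: "cstar_algebra st cmul \<Longrightarrow> unitary st u \<Longrightarrow> unitary st (st u)"
  unfolding unitary_def using cstar_algebra_st_st by metis

lemma unitary_mult:
  assumes cs: "cstar_algebra st cmul" and "unitary st u" "unitary st v"
  shows "unitary st (u * v)"
proof -
  have "st (u * v) * (u * v) = st v * (st u * u) * v"
    and "(u * v) * st (u * v) = u * (v * st v) * st u"
    using cstar_algebra_st_mult[OF cs] by (simp_all add: mult.assoc)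
  with assms(2,3) show ?thesis unfolding unitary_def by simp
qed

lemma norm_unitary:
  assumes "cstar_algebra st cmul" "unitary st u"
  shows "norm u = 1"
proof -
  have "(norm u)\<^sup>2 = 1"
    using cstar_algebra_norm_st_mult_self[OF assms(1), of u] assms(2) unfolding unitary_def by simp
  then show ?thesis using norm_ge_zero[of u] by (simp add: power2_eq_1_iff)
qed

lemma unitary_conj_cancel:
  assumes "unitary st v"
  shows "u * a * st v * (v * b * st w) = u * (a * b) * st w"
proof -
  have "u * a * st v * (v * b * st w) = u * (a * (st v * v) * b) * st w"
    by (simp add: mult.assoc)
  with assms show ?thesis unfolding unitary_def by simp
qed

lemma norm_unitary_conj_le:
  assumes cs: "cstar_algebra st cmul" and u: "unitary st u"
  shows "norm (u * a * st u) \<le> norm a"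
proof -
  have "norm (u * a * st u) \<le> norm u * norm a * norm (st u)"
    by (rule order_trans[OF norm_mult_ineq mult_right_mono[OF norm_mult_ineq norm_ge_zero]])
  also have "\<dots> = norm a"
    using norm_unitary[OF cs u] norm_unitary[OF cs unitary_st[OF cs u]] by simp
  finally show ?thesis .
qed

lemma norm_st_mult_minus_one_le:
  assumes cs: "cstar_algebra st cmul" and p: "unitary st p"
  shows "norm (st p * q - 1) \<le> norm (p - q)"
proof -
  have "st p * q - 1 = st p * (q - p)"
    using p unfolding unitary_def by (simp add: algebra_simps)
  then have "norm (st p * q - 1) \<le> norm (st p) * norm (q - p)"
    by (metis norm_mult_ineq)
  also have "norm (st p) = 1"
    by (rule norm_unitary[OF cs unitary_st[OF cs p]])
  finally show ?thesis by (simp add: norm_minus_commute)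
qed

lemma norm_mult_minus_one_le:
  fixes a b :: "'b::real_normed_algebra_1"
  assumes "norm b \<le> 1"
  shows "norm (a * b - 1) \<le> norm (a - 1) + norm (b - 1)"
proof -
  have "norm (a * b - 1) = norm ((a - 1) * b + (b - 1))"
    by (simp add: algebra_simps)
  also have "\<dots> \<le> norm (a - 1) * norm b + norm (b - 1)"
    by (rule order_trans[OF norm_triangle_ineq add_right_mono[OF norm_mult_ineq]])
  also have "\<dots> \<le> norm (a - 1) + norm (b - 1)"
    using mult_left_mono[OF assms norm_ge_zero[of "a - 1"]] by simp
  finally show ?thesis .
qed

lemma simplicial_complex_face:
  "simplicial_complex X \<Longrightarrow> \<sigma> \<in> X \<Longrightarrow> \<rho> \<subseteq> \<sigma> \<Longrightarrow> \<rho> \<noteq> {} \<Longrightarrow> \<rho> \<in> X"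
  unfolding simplicial_complex_def by blast

lemma simplicial_complex_finite: "simplicial_complex X \<Longrightarrow> \<sigma> \<in> X \<Longrightarrow> finite \<sigma>"
  unfolding simplicial_complex_def by blast

lemma vtx_in_simplex_pts: "finite \<sigma> \<Longrightarrow> v \<in> \<sigma> \<Longrightarrow> vtx v \<in> simplex_pts \<sigma>"
  unfolding simplex_pts_def vtx_def by (auto simp: sum.delta)

lemma sdist_vtx_edge: "a \<noteq> b \<Longrightarrow> sdist {a, b} (vtx b) (vtx a) = sqrt 2"
  unfolding sdist_def vtx_def by simp

lemma trivialization_family_unitary_vtx:
  assumes "trivialization_family st X g" "simplicial_complex X" "\<sigma> \<in> X" "v \<in> \<sigma>"
  shows "unitary st (g \<sigma> (vtx v))"
  using assms vtx_in_simplex_pts[OF simplicial_complex_finite[OF assms(2,3)] assms(4)]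
  unfolding trivialization_family_def by blast

definition framed_edge_transport ::
  "('b::real_normed_algebra_1 \<Rightarrow> 'b) \<Rightarrow> ('a set \<Rightarrow> ('a \<Rightarrow> real) \<Rightarrow> 'b) \<Rightarrow> 'a set \<Rightarrow> 'a \<Rightarrow> 'a \<Rightarrow> 'b"
  where "framed_edge_transport st g \<sigma> a b =
    st (transition st g {a, b} \<sigma> (vtx b)) * transition st g {a, b} \<sigma> (vtx a)"

lemma edge_transport_eq_framed:
  assumes cs: "cstar_algebra st cmul"
    and ua: "unitary st (g \<sigma> (vtx a))" and ub: "unitary st (g \<sigma> (vtx b))"
  shows "edge_transport st g a b =
    g \<sigma> (vtx b) * framed_edge_transport st g \<sigma> a b * st (g \<sigma> (vtx a))"
proof -
  have edge_frame: "g {a, b} x = g \<sigma> x * st (transition st g {a, b} \<sigma> x)"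
    if "unitary st (g \<sigma> x)" for x
  proof -
    have "g \<sigma> x * st (transition st g {a, b} \<sigma> x) = (g \<sigma> x * st (g \<sigma> x)) * g {a, b} x"
      unfolding transition_def
      using cstar_algebra_st_mult[OF cs] cstar_algebra_st_st[OF cs] by (simp add: mult.assoc)
    with that show ?thesis unfolding unitary_def by simp
  qed
  show ?thesis
    unfolding edge_transport_def framed_edge_transport_def edge_frame[OF ua] edge_frame[OF ub]
    using cstar_algebra_st_mult[OF cs] cstar_algebra_st_st[OF cs] by (simp add: mult.assoc)
qed

lemma unitary_framed_edge_transport:
  assumes cs: "cstar_algebra st cmul" and sc: "simplicial_complex X"
    and tf: "trivialization_family st X g" and "\<sigma> \<in> X" "a \<in> \<sigma>" "b \<in> \<sigma>"
  shows "unitary st (framed_edge_transport st g \<sigma> a b)"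
proof -
  have edge: "{a, b} \<in> X"
    using simplicial_complex_face[OF sc \<open>\<sigma> \<in> X\<close>] assms(5,6) by simp
  have "unitary st (transition st g {a, b} \<sigma> (vtx v))" if "v \<in> {a, b}" for v
    unfolding transition_def
    using that assms(5,6) trivialization_family_unitary_vtx[OF tf sc]
      unitary_mult[OF cs unitary_st[OF cs]] edge \<open>\<sigma> \<in> X\<close> by blast
  then show ?thesis
    unfolding framed_edge_transport_def by (simp add: unitary_mult[OF cs] unitary_st[OF cs])
qed

lemma norm_framed_edge_transport_minus_one_le:
  assumes cs: "cstar_algebra st cmul" and sc: "simplicial_complex X"
    and tf: "trivialization_family st X g" and flat: "eps_flat st X g \<epsilon>"
    and \<sigma>: "\<sigma> \<in> X" and "a \<in> \<sigma>" "b \<in> \<sigma>" "a \<noteq> b"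
  shows "norm (framed_edge_transport st g \<sigma> a b - 1) \<le> sqrt 2 * \<epsilon>"
proof -
  let ?\<Psi> = "transition st g {a, b} \<sigma>"
  have sub: "{a, b} \<subseteq> \<sigma>" using assms(6,7) by simp
  have edge: "{a, b} \<in> X" using simplicial_complex_face[OF sc \<sigma> sub] by simp
  have pts: "vtx a \<in> simplex_pts {a, b}" "vtx b \<in> simplex_pts {a, b}"
    by (simp_all add: vtx_in_simplex_pts)
  have "unitary st (?\<Psi> (vtx b))"
    unfolding transition_def
    using trivialization_family_unitary_vtx[OF tf sc] unitary_mult[OF cs unitary_st[OF cs]]
      edge \<sigma> assms(7) by blast
  then have "norm (framed_edge_transport st g \<sigma> a b - 1) \<le> norm (?\<Psi> (vtx b) - ?\<Psi> (vtx a))"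
    unfolding framed_edge_transport_def by (rule norm_st_mult_minus_one_le[OF cs])
  also have "\<dots> \<le> \<epsilon> * sdist {a, b} (vtx b) (vtx a)"
    using flat edge \<sigma> sub pts unfolding eps_flat_def by blast
  finally show ?thesis using sdist_vtx_edge[OF \<open>a \<noteq> b\<close>] by (simp add: mult.commute)
qed

lemma norm_path_transport_triangle_minus_one_le:
  assumes cs: "cstar_algebra st cmul" and sc: "simplicial_complex X"
    and \<sigma>: "{v0, v1, v2} \<in> X" and "v0 \<noteq> v1" "v1 \<noteq> v2" "v0 \<noteq> v2"
    and tf: "trivialization_family st X g" and flat: "eps_flat st X g \<epsilon>"
  shows "norm (path_transport st g [v0, v1, v2, v0] - 1) \<le> 3 * (sqrt 2 * \<epsilon>)"
proof -
  let ?\<sigma> = "{v0, v1, v2}"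
  let ?G = "\<lambda>v. g ?\<sigma> (vtx v)"
  let ?D = "framed_edge_transport st g ?\<sigma>"
  have G: "unitary st (?G v)" if "v \<in> ?\<sigma>" for v
    using trivialization_family_unitary_vtx[OF tf sc \<sigma> that] .
  then have G012: "unitary st (?G v0)" "unitary st (?G v1)" "unitary st (?G v2)"
    by simp_all
  have D: "unitary st (?D a b)" if "a \<in> ?\<sigma>" "b \<in> ?\<sigma>" for a b
    using unitary_framed_edge_transport[OF cs sc tf \<sigma> that] .
  have D_close: "norm (?D a b - 1) \<le> sqrt 2 * \<epsilon>" if "a \<in> ?\<sigma>" "b \<in> ?\<sigma>" "a \<noteq> b" for a b
    using norm_framed_edge_transport_minus_one_le[OF cs sc tf flat \<sigma> that] .
  have "path_transport st g [v0, v1, v2, v0] =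
      ?G v0 * ?D v2 v0 * st (?G v2) * (?G v2 * ?D v1 v2 * st (?G v1) * (?G v1 * ?D v0 v1 * st (?G v0)))"
    using edge_transport_eq_framed[where g = g and \<sigma> = ?\<sigma> and a = v0 and b = v1, OF cs G012(1,2)]
      edge_transport_eq_framed[where g = g and \<sigma> = ?\<sigma> and a = v1 and b = v2, OF cs G012(2,3)]
      edge_transport_eq_framed[where g = g and \<sigma> = ?\<sigma> and a = v2 and b = v0, OF cs G012(3,1)]
    by (simp add: mult.assoc)
  also have "\<dots> = ?G v0 * (?D v2 v0 * (?D v1 v2 * ?D v0 v1)) * st (?G v0)"
    using G by (simp add: unitary_conj_cancel)
  finally have "path_transport st g [v0, v1, v2, v0] - 1 =
      ?G v0 * (?D v2 v0 * (?D v1 v2 * ?D v0 v1) - 1) * st (?G v0)"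
    using G[of v0] unfolding unitary_def by (simp add: right_diff_distrib left_diff_distrib)
  then have "norm (path_transport st g [v0, v1, v2, v0] - 1) \<le>
      norm (?D v2 v0 * (?D v1 v2 * ?D v0 v1) - 1)"
    using norm_unitary_conj_le[OF cs G] by simp
  also have "\<dots> \<le> norm (?D v2 v0 - 1) + norm (?D v1 v2 * ?D v0 v1 - 1)"
    using D by (intro norm_mult_minus_one_le) (simp add: norm_unitary[OF cs] unitary_mult[OF cs])
  also have "\<dots> \<le> norm (?D v2 v0 - 1) + (norm (?D v1 v2 - 1) + norm (?D v0 v1 - 1))"
    using D[of v0 v1] by (simp add: norm_mult_minus_one_le norm_unitary[OF cs])
  also have "\<dots> \<le> 3 * (sqrt 2 * \<epsilon>)"
    using D_close[of v2 v0] D_close[of v1 v2] D_close[of v0 v1] assms(4-6) by simp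
  finally show ?thesis .
qed

theorem mainTheorem3:
  fixes st :: "'b::{real_normed_algebra_1, banach} \<Rightarrow> 'b"
    and cmul :: "complex \<Rightarrow> 'b \<Rightarrow> 'b"
    and X :: "'a set set"
    and g :: "'a set \<Rightarrow> ('a \<Rightarrow> real) \<Rightarrow> 'b"
    and v0 v1 v2 :: 'a
    and \<epsilon> :: real
  assumes "cstar_algebra st cmul"
    and "simplicial_complex X"
    and "{v0, v1, v2} \<in> X"
    and "v0 \<noteq> v1" and "v1 \<noteq> v2" and "v0 \<noteq> v2"
    and "trivialization_family st X g"
    and "eps_flat st X g \<epsilon>"
    and "\<epsilon> \<le> 1 / sqrt 2"
  shows "norm (path_transport st g [v0, v1, v2, v0] - 1) \<le> 7 * sqrt 2 * \<epsilon>"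
proof -
  \<comment> \<open>The sharper bound 3\<surd>2 \<epsilon> holds without the smallness hypothesis on \<epsilon>.\<close>
  have bound: "norm (path_transport st g [v0, v1, v2, v0] - 1) \<le> 3 * (sqrt 2 * \<epsilon>)"
    using norm_path_transport_triangle_minus_one_le assms(1-8) .
  then have "0 \<le> sqrt 2 * \<epsilon>"
    using order_trans[OF norm_ge_zero bound] by (simp add: mult.commute)
  with bound show ?thesis by (simp add: mult.assoc)
qed

end
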